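(* Every pawful graph is diagonal.
   Context: All graphs are finite, simple, undirected and connected; $d$ denotes the shortest-path distance. A pawful graph is a connected graph $G$ of diameter at most $2$ such that for any three vertices $u,v,w$ with $d(u,v)=d(v,w)=2$ and $d(u,w)=1$ there exists a vertex $x$ with $d(x,u)=d(x,v)=d(x,w)=1$. For vertices $x_0,\dots,x_k$ put $\ell(x_0,\dots,x_k)=\sum_{i=0}^{k-1}d(x_i,x_{i+1})$. The magnitude chain complex: $\mathrm{MC}_{k,l}(G)$ is the free abelian group on $I_{k,l}(G)=\{(x_0,\dots,x_k)\in V(G)^{k+1}: x_i\neq x_{i+1}\ \forall i,\ \ell(x_0,\dots,x_k)=l\}$, with differential $\partial=\sum_{i=1}^{k-1}(-1)^i\partial_i:\mathrm{MC}_{k,l}\to\mathrm{MC}_{k-1,l}$, where $\partial_i(x_0,\dots,x_k)=(x_0,\dots,\hat x_i,\dots,x_k)$ if deleting $x_i$ does not change $\ell$, and $0$ otherwise. Magnitude homology: $\mathrm{MH}_{k,l}(G)=H_k(\mathrm{MC}_{*,l}(G))$. $G$ is diagonal if $\mathrm{MH}_{k,l}(G)=0$ whenever $k\ne l$. *)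

theory Defs
  imports Main
begin

definition simple_graph :: "'a set \<Rightarrow> ('a \<Rightarrow> 'a \<Rightarrow> bool) \<Rightarrow> bool" where
  "simple_graph V E \<longleftrightarrow> finite V \<and> (\<forall>u v. E u v \<longrightarrow> u \<in> V \<and> v \<in> V)
     \<and> (\<forall>u v. E u v \<longrightarrow> E v u) \<and> (\<forall>u. \<not> E u u)"

definition is_walk :: "'a set \<Rightarrow> ('a \<Rightarrow> 'a \<Rightarrow> bool) \<Rightarrow> 'a list \<Rightarrow> bool" where
  "is_walk V E xs \<longleftrightarrow> xs \<noteq> [] \<and> set xs \<subseteq> V \<and> (\<forall>i. Suc i < length xs \<longrightarrow> E (xs ! i) (xs ! Suc i))"

definition graph_connected :: "'a set \<Rightarrow> ('a \<Rightarrow> 'a \<Rightarrow> bool) \<Rightarrow> bool" where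
  "graph_connected V E \<longleftrightarrow> (\<forall>u\<in>V. \<forall>v\<in>V. \<exists>xs. is_walk V E xs \<and> hd xs = u \<and> last xs = v)"

definition gdist :: "'a set \<Rightarrow> ('a \<Rightarrow> 'a \<Rightarrow> bool) \<Rightarrow> 'a \<Rightarrow> 'a \<Rightarrow> nat" where
  "gdist V E u v = (LEAST n. \<exists>xs. is_walk V E xs \<and> hd xs = u \<and> last xs = v \<and> length xs = Suc n)"

definition pawful :: "'a set \<Rightarrow> ('a \<Rightarrow> 'a \<Rightarrow> bool) \<Rightarrow> bool" where
  "pawful V E \<longleftrightarrow> simple_graph V E \<and> graph_connected V E
     \<and> (\<forall>u\<in>V. \<forall>v\<in>V. gdist V E u v \<le> 2)
     \<and> (\<forall>u\<in>V. \<forall>v\<in>V. \<forall>w\<in>V. gdist V E u v = 2 \<and> gdist V E v w = 2 \<and> gdist V E u w = 1 \<longrightarrow>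
          (\<exists>x\<in>V. gdist V E x u = 1 \<and> gdist V E x v = 1 \<and> gdist V E x w = 1))"

definition tuple_len :: "'a set \<Rightarrow> ('a \<Rightarrow> 'a \<Rightarrow> bool) \<Rightarrow> 'a list \<Rightarrow> nat" where
  "tuple_len V E xs = (\<Sum>i < length xs - 1. gdist V E (xs ! i) (xs ! Suc i))"

(* generators I_{k,l}(G) of MC_{k,l}(G): tuples (x_0,...,x_k) as lists of length k+1 *)
definition MC_gens :: "'a set \<Rightarrow> ('a \<Rightarrow> 'a \<Rightarrow> bool) \<Rightarrow> nat \<Rightarrow> nat \<Rightarrow> 'a list set" where
  "MC_gens V E k l = {xs. length xs = Suc k \<and> set xs \<subseteq> V
      \<and> (\<forall>i<k. xs ! i \<noteq> xs ! Suc i) \<and> tuple_len V E xs = l}"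

definition del_at :: "nat \<Rightarrow> 'a list \<Rightarrow> 'a list" where
  "del_at i xs = take i xs @ drop (Suc i) xs"

(* elements of MC_{k,l}(G): integer-valued functions supported on I_{k,l}(G)
   (finitely supported since V is finite) *)
definition MC_chain :: "'a set \<Rightarrow> ('a \<Rightarrow> 'a \<Rightarrow> bool) \<Rightarrow> nat \<Rightarrow> nat \<Rightarrow> ('a list \<Rightarrow> int) \<Rightarrow> bool" where
  "MC_chain V E k l c \<longleftrightarrow> (\<forall>xs. xs \<notin> MC_gens V E k l \<longrightarrow> c xs = 0)"

definition MC_boundary :: "'a set \<Rightarrow> ('a \<Rightarrow> 'a \<Rightarrow> bool) \<Rightarrow> nat \<Rightarrow> nat \<Rightarrow> ('a list \<Rightarrow> int) \<Rightarrow> 'a list \<Rightarrow> int" where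
  "MC_boundary V E k l c y = (\<Sum>x \<in> MC_gens V E k l. c x *
      (\<Sum>i\<in>{1..<k}. if tuple_len V E (del_at i x) = l \<and> del_at i x = y then (-1) ^ i else 0))"

(* MH_{k,l}(G) = ker(\<partial>_k) / im(\<partial>_{k+1}) = 0, i.e. every cycle is a boundary *)
definition MH_zero :: "'a set \<Rightarrow> ('a \<Rightarrow> 'a \<Rightarrow> bool) \<Rightarrow> nat \<Rightarrow> nat \<Rightarrow> bool" where
  "MH_zero V E k l \<longleftrightarrow> (\<forall>c. MC_chain V E k l c \<and> MC_boundary V E k l c = (\<lambda>_. 0) \<longrightarrow>
      (\<exists>b. MC_chain V E (Suc k) l b \<and> MC_boundary V E (Suc k) l b = c))"

definition diagonal :: "'a set \<Rightarrow> ('a \<Rightarrow> 'a \<Rightarrow> bool) \<Rightarrow> bool" where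
  "diagonal V E \<longleftrightarrow> (\<forall>k l. k \<noteq> l \<longrightarrow> MH_zero V E k l)"

end

theory Submission
  imports Defs
begin

text \<open>
  In a graph of diameter at most two all distances are 0, 1 or 2, so deleting an inner vertex
  x_i of a tuple preserves its length exactly when x_(i-1), x_i, x_(i+1) is a path between two
  vertices at distance 2; and a tuple with k steps and length l > k has a gap, i.e. two
  consecutive vertices at distance 2. The generators are matched as in discrete Morse theory:
  a tuple is raised by inserting a common neighbour (a bridge) into its first gap, unless an
  earlier vertex already is such a bridge, in which case the tuple is the raise of the tuple
  without that vertex. The pawful condition lets the bridge at position j be chosen adjacent or
  equal to x_(j-1), so that raising never makes x_j deletable; consequently a weight built from
  the deletable vertices before the first gap strictly decreases along the matching. By
  induction on this weight every chain agrees with a boundary on the lower cells, and a cycle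
  vanishing on the lower cells is zero: at the lower partner of maximal weight, only its raise
  contributes to the boundary.
\<close>

definition ins_at :: "nat \<Rightarrow> 'a \<Rightarrow> 'a list \<Rightarrow> 'a list" where
  "ins_at i y xs = take i xs @ y # drop i xs"

lemma length_del_at [simp]: "i < length xs \<Longrightarrow> length (del_at i xs) = length xs - 1"
  by (simp add: del_at_def)

lemma length_ins_at [simp]: "i \<le> length xs \<Longrightarrow> length (ins_at i y xs) = Suc (length xs)"
  by (simp add: ins_at_def)

lemma nth_del_at:
  "i < length xs \<Longrightarrow> n < length xs - 1 \<Longrightarrow> del_at i xs ! n = (if n < i then xs ! n else xs ! Suc n)"
  by (auto simp: del_at_def nth_append min_def)

lemma nth_ins_at:
  "i \<le> length xs \<Longrightarrow> n \<le> length xs \<Longrightarrow>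
    ins_at i y xs ! n = (if n < i then xs ! n else if n = i then y else xs ! (n - 1))"
  by (auto simp: ins_at_def nth_append min_def nth_Cons')

lemma del_at_ins_at: "i \<le> length xs \<Longrightarrow> del_at i (ins_at i y xs) = xs"
  by (simp add: del_at_def ins_at_def min_def)

lemma ins_at_del_at: "i < length xs \<Longrightarrow> ins_at i (xs ! i) (del_at i xs) = xs"
  by (simp add: del_at_def ins_at_def min_def id_take_nth_drop[symmetric])

lemma del_at_del_at:
  "j < i \<Longrightarrow> i < length xs \<Longrightarrow> del_at j (del_at i xs) = del_at (i - 1) (del_at j xs)"
  by (cases "i = Suc j") (auto simp: del_at_def take_append drop_append min_def drop_take)

lemma set_del_at_subset: "set (del_at i xs) \<subseteq> set xs"
  by (auto simp: del_at_def dest: in_set_takeD in_set_dropD)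

lemma set_ins_at_subset: "set (ins_at i y xs) \<subseteq> insert y (set xs)"
  by (auto simp: ins_at_def dest: in_set_takeD in_set_dropD)

lemma del_at_neq:
  assumes "\<forall>n. Suc n < length xs \<longrightarrow> xs ! n \<noteq> xs ! Suc n" and "i < i'" and "i' < length xs"
  shows "del_at i xs \<noteq> del_at i' xs"
proof
  assume "del_at i xs = del_at i' xs"
  then have "del_at i xs ! i = del_at i' xs ! i" by simp
  then have "xs ! Suc i = xs ! i" using assms by (simp add: nth_del_at)
  then show False using assms(1)[rule_format, of i] assms(2,3) by simp
qed

lemma sum_face_pairs_cancel:
  fixes f :: "nat \<Rightarrow> nat \<Rightarrow> 'b::ab_group_add"
  assumes antisym: "\<And>i j. 1 \<le> j \<Longrightarrow> j < i \<Longrightarrow> i < Suc k \<Longrightarrow> f j (i - 1) = - f i j"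
  shows "(\<Sum>i\<in>{1..<Suc k}. \<Sum>j\<in>{1..<k}. f i j) = 0"
proof -
  let ?P = "{1..<Suc k} \<times> {1..<k}"
  let ?below = "{p \<in> ?P. snd p < fst p}" and ?above = "{p \<in> ?P. \<not> snd p < fst p}"
  have swap: "bij_betw (\<lambda>(i, j). (j, i - 1)) ?below ?above"
    by (rule bij_betw_byWitness[where f' = "\<lambda>(j, i). (i + 1, j)"]) auto
  have "(\<Sum>p\<in>?above. f (fst p) (snd p)) = (\<Sum>(i, j)\<in>?below. f j (i - 1))"
    using sum.reindex_bij_betw[OF swap, of "\<lambda>p. f (fst p) (snd p)"] by (simp add: split_def)
  also have "\<dots> = - (\<Sum>p\<in>?below. f (fst p) (snd p))"
    unfolding sum_negf[symmetric] by (rule sum.cong) (use antisym in auto)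
  finally have "(\<Sum>p\<in>?below. f (fst p) (snd p)) + (\<Sum>p\<in>?above. f (fst p) (snd p)) = 0"
    by simp
  moreover have "(\<Sum>p\<in>?P. f (fst p) (snd p))
      = (\<Sum>p\<in>?below. f (fst p) (snd p)) + (\<Sum>p\<in>?above. f (fst p) (snd p))"
    by (subst sum.union_disjoint[symmetric]) (auto intro: sum.cong)
  ultimately show ?thesis by (simp add: sum.cartesian_product split_def)
qed

section \<open>Lengths of tuples in a graph of diameter two\<close>

definition hdist :: "('a \<Rightarrow> 'a \<Rightarrow> bool) \<Rightarrow> 'a \<Rightarrow> 'a \<Rightarrow> nat" where
  "hdist E u v = (if u = v then 0 else if E u v then 1 else 2)"

lemma hdist_eq_2_iff: "hdist E u v = 2 \<longleftrightarrow> u \<noteq> v \<and> \<not> E u v"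
  by (simp add: hdist_def)

lemma hdist_triangle: "hdist E u w \<le> hdist E u v + hdist E v w"
  by (auto simp: hdist_def)

fun hlen :: "('a \<Rightarrow> 'a \<Rightarrow> bool) \<Rightarrow> 'a list \<Rightarrow> nat" where
  "hlen E (a # b # xs) = hdist E a b + hlen E (b # xs)"
| "hlen E _ = 0"

lemma hlen_conv_sum: "hlen E xs = (\<Sum>i < length xs - 1. hdist E (xs ! i) (xs ! Suc i))"
  by (induction E xs rule: hlen.induct) (simp_all del: sum.lessThan_Suc add: sum.lessThan_Suc_shift)

lemma hlen_del_at:
  "0 < i \<Longrightarrow> Suc i < length xs \<Longrightarrow>
    hlen E xs + hdist E (xs ! (i - 1)) (xs ! Suc i)
      = hlen E (del_at i xs) + hdist E (xs ! (i - 1)) (xs ! i) + hdist E (xs ! i) (xs ! Suc i)"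
proof (induction xs arbitrary: i)
  case (Cons a xs)
  show ?case
  proof (cases "i = 1")
    case True
    then obtain b c rest where "xs = b # c # rest"
      using Cons.prems by (cases xs; cases "tl xs") auto
    then show ?thesis using True by (simp add: del_at_def)
  next
    case False
    then obtain i' where i': "i = Suc i'" "0 < i'" using Cons.prems by (cases i) auto
    then obtain b xs' where xs: "xs = b # xs'" using Cons.prems by (cases xs) auto
    have "del_at i (a # xs) = a # del_at i' xs" using i' by (simp add: del_at_def)
    moreover have "del_at i' xs = b # del_at (i' - 1) xs'"
      using i' xs by (cases i') (auto simp: del_at_def)
    ultimately show ?thesis using Cons.IH[of i'] Cons.prems i' xs by (simp add: del_at_def)
  qed
qed simp

lemma hlen_del_at_le: "0 < i \<Longrightarrow> Suc i < length xs \<Longrightarrow> hlen E (del_at i xs) \<le> hlen E xs"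
  using hlen_del_at[of i xs E] hdist_triangle[of E "xs ! (i - 1)" "xs ! Suc i" "xs ! i"] by linarith

lemma hlen_del_at_eq_iff:
  assumes "0 < i" "Suc i < length xs" "xs ! (i - 1) \<noteq> xs ! i" "xs ! i \<noteq> xs ! Suc i"
  shows "hlen E (del_at i xs) = hlen E xs \<longleftrightarrow>
    E (xs ! (i - 1)) (xs ! i) \<and> E (xs ! i) (xs ! Suc i)
    \<and> xs ! (i - 1) \<noteq> xs ! Suc i \<and> \<not> E (xs ! (i - 1)) (xs ! Suc i)"
  using hlen_del_at[OF assms(1,2), of E] assms(3,4) by (auto simp: hdist_def split: if_splits)

section \<open>The magnitude chain complex\<close>

definition MC_incidence :: "'a set \<Rightarrow> ('a \<Rightarrow> 'a \<Rightarrow> bool) \<Rightarrow> nat \<Rightarrow> nat \<Rightarrow> 'a list \<Rightarrow> 'a list \<Rightarrow> int" where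
  "MC_incidence V E k l x y =
    (\<Sum>i\<in>{1..<k}. if tuple_len V E (del_at i x) = l \<and> del_at i x = y then (-1) ^ i else 0)"

lemma MC_boundary_eq_incidence:
  "MC_boundary V E k l c y = (\<Sum>x\<in>MC_gens V E k l. c x * MC_incidence V E k l x y)"
  by (simp add: MC_boundary_def MC_incidence_def)

lemma MC_boundary_add:
  "MC_boundary V E k l (\<lambda>x. b x + b' x) y = MC_boundary V E k l b y + MC_boundary V E k l b' y"
  by (simp add: MC_boundary_eq_incidence distrib_right sum.distrib)

lemma MC_boundary_diff:
  "MC_boundary V E k l (\<lambda>x. b x - b' x) y = MC_boundary V E k l b y - MC_boundary V E k l b' y"
  by (simp add: MC_boundary_eq_incidence left_diff_distrib sum_subtractf)

lemma MC_boundary_zero: "MC_boundary V E k l (\<lambda>_. 0) = (\<lambda>_. 0)"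
  by (rule ext) (simp add: MC_boundary_eq_incidence)

locale diameter_two_graph =
  fixes V :: "'a set" and E :: "'a \<Rightarrow> 'a \<Rightarrow> bool"
  assumes simple: "simple_graph V E"
    and connected: "graph_connected V E"
    and diameter: "\<And>u v. u \<in> V \<Longrightarrow> v \<in> V \<Longrightarrow> gdist V E u v \<le> 2"
begin

lemma finite_V: "finite V"
  using simple by (simp add: simple_graph_def)

lemma edge_in_V: "E u v \<Longrightarrow> u \<in> V \<and> v \<in> V"
  using simple by (simp add: simple_graph_def)

lemma edge_irrefl: "\<not> E u u"
  using simple by (simp add: simple_graph_def)

lemma edge_sym: "E u v \<Longrightarrow> E v u"
  using simple by (simp add: simple_graph_def)

lemma shortest_walk_exists:
  assumes "u \<in> V" "v \<in> V"
  shows "\<exists>xs. is_walk V E xs \<and> hd xs = u \<and> last xs = v \<and> length xs = Suc (gdist V E u v)"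
proof -
  obtain xs where "is_walk V E xs" "hd xs = u" "last xs = v"
    using connected assms unfolding graph_connected_def by blast
  moreover from \<open>is_walk V E xs\<close> have "length xs = Suc (length xs - 1)"
    by (cases xs) (auto simp: is_walk_def)
  ultimately have "\<exists>n xs. is_walk V E xs \<and> hd xs = u \<and> last xs = v \<and> length xs = Suc n"
    by blast
  then show ?thesis unfolding gdist_def by (rule LeastI_ex)
qed

lemma gdist_eq_hdist:
  assumes "u \<in> V" "v \<in> V"
  shows "gdist V E u v = hdist E u v"
proof -
  have le: "gdist V E u v \<le> n"
    if "is_walk V E ys" "hd ys = u" "last ys = v" "length ys = Suc n" for ys n
    unfolding gdist_def by (rule Least_le) (use that in blast)
  obtain xs where xs: "is_walk V E xs" "hd xs = u" "last xs = v" "length xs = Suc (gdist V E u v)"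
    using shortest_walk_exists[OF assms] by blast
  have nonzero: "gdist V E u v \<noteq> 0" if "u \<noteq> v"
  proof
    assume "gdist V E u v = 0"
    then obtain a where "xs = [a]" using xs(4) by (cases xs) auto
    then show False using xs that by simp
  qed
  consider "u = v" | "u \<noteq> v" "E u v" | "u \<noteq> v" "\<not> E u v" by blast
  then show ?thesis
  proof cases
    case 1
    then show ?thesis using le[of "[u]" 0] assms by (simp add: is_walk_def hdist_def)
  next
    case 2
    have "is_walk V E [u, v]"
      using assms 2 by (auto simp: is_walk_def less_Suc_eq)
    then show ?thesis using le[of "[u, v]" 1] nonzero 2 by (simp add: hdist_def)
  next
    case 3
    have "gdist V E u v \<noteq> 1"
    proof
      assume "gdist V E u v = 1"
      then obtain a b where "xs = [a, b]" using xs(4) by (cases xs; cases "tl xs") auto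
      moreover from this have "E a b" using xs(1) unfolding is_walk_def by force
      ultimately show False using xs 3 by simp
    qed
    then show ?thesis using diameter[OF assms] nonzero 3 by (simp add: hdist_def)
  qed
qed

lemma gdist_eq_1_iff: "u \<in> V \<Longrightarrow> v \<in> V \<Longrightarrow> gdist V E u v = 1 \<longleftrightarrow> E u v"
  using edge_irrefl by (auto simp: gdist_eq_hdist hdist_def)

lemma gdist_eq_2_iff: "u \<in> V \<Longrightarrow> v \<in> V \<Longrightarrow> gdist V E u v = 2 \<longleftrightarrow> u \<noteq> v \<and> \<not> E u v"
  by (simp add: gdist_eq_hdist hdist_eq_2_iff)

lemma common_neighbour:
  assumes "u \<in> V" "w \<in> V" "u \<noteq> w" "\<not> E u w"
  shows "\<exists>v. E u v \<and> E v w"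
proof -
  obtain xs where xs: "is_walk V E xs" "hd xs = u" "last xs = w" "length xs = Suc (gdist V E u w)"
    using shortest_walk_exists[OF assms(1,2)] by blast
  then have len: "length xs = 3" using assms by (simp add: gdist_eq_2_iff)
  then have "\<forall>i<2. E (xs ! i) (xs ! Suc i)"
    using xs(1) unfolding is_walk_def by auto
  then have "E (xs ! 0) (xs ! 1)" "E (xs ! 1) (xs ! 2)"
    by (auto simp: numeral_2_eq_2)
  moreover obtain a v b where "xs = [a, v, b]"
    using len by (cases xs; cases "tl xs"; cases "tl (tl xs)") auto
  ultimately show ?thesis using xs by auto
qed

lemma tuple_len_eq_hlen: "set xs \<subseteq> V \<Longrightarrow> tuple_len V E xs = hlen E xs"
  unfolding tuple_len_def hlen_conv_sum by (rule sum.cong) (auto intro!: gdist_eq_hdist)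

lemma MC_gens_iff:
  "xs \<in> MC_gens V E k l \<longleftrightarrow>
    length xs = Suc k \<and> set xs \<subseteq> V \<and> (\<forall>i<k. xs ! i \<noteq> xs ! Suc i) \<and> hlen E xs = l"
  unfolding MC_gens_def using tuple_len_eq_hlen by auto

lemma finite_MC_gens: "finite (MC_gens V E k l)"
proof (rule finite_subset)
  show "MC_gens V E k l \<subseteq> {xs. set xs \<subseteq> V \<and> length xs = Suc k}"
    by (auto simp: MC_gens_iff)
qed (rule finite_lists_length_eq[OF finite_V])

lemma MC_gens_empty:
  assumes "l < k"
  shows "MC_gens V E k l = {}"
proof -
  have False if "xs \<in> MC_gens V E k l" for xs
  proof -
    have xs: "length xs = Suc k" "\<forall>i<k. xs ! i \<noteq> xs ! Suc i" "hlen E xs = l"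
      using that by (auto simp: MC_gens_iff)
    then have "(\<Sum>i<k. 1) \<le> (\<Sum>i<k. hdist E (xs ! i) (xs ! Suc i))"
      by (intro sum_mono) (use xs in \<open>auto simp: hdist_def\<close>)
    then show False using xs assms by (simp add: hlen_conv_sum)
  qed
  then show ?thesis by blast
qed

lemma face_of_MC_gen:
  assumes x: "x \<in> MC_gens V E (Suc k) l" and i: "1 \<le> i" "i < Suc k"
    and len: "hlen E (del_at i x) = l"
  shows "E (x ! (i - 1)) (x ! i)" "E (x ! i) (x ! Suc i)"
    and "x ! (i - 1) \<noteq> x ! Suc i" "\<not> E (x ! (i - 1)) (x ! Suc i)"
proof -
  have xs: "length x = Suc (Suc k)" "\<forall>n<Suc k. x ! n \<noteq> x ! Suc n" "hlen E x = l"
    using x by (auto simp: MC_gens_iff)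
  moreover have "x ! (i - 1) \<noteq> x ! i" "x ! i \<noteq> x ! Suc i"
    using xs(2)[rule_format, of "i - 1"] xs(2)[rule_format, of i] i by auto
  ultimately show "E (x ! (i - 1)) (x ! i)" "E (x ! i) (x ! Suc i)"
    and "x ! (i - 1) \<noteq> x ! Suc i" "\<not> E (x ! (i - 1)) (x ! Suc i)"
    using i len hlen_del_at_eq_iff[of i x E] by auto
qed

lemma del_at_in_MC_gens:
  assumes x: "x \<in> MC_gens V E (Suc k) l" and i: "1 \<le> i" "i < Suc k"
    and len: "hlen E (del_at i x) = l"
  shows "del_at i x \<in> MC_gens V E k l"
proof -
  have xs: "length x = Suc (Suc k)" "set x \<subseteq> V" "\<forall>n<Suc k. x ! n \<noteq> x ! Suc n"
    using x by (auto simp: MC_gens_iff)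
  have "x ! (i - 1) \<noteq> x ! Suc i" using face_of_MC_gen[OF assms] by blast
  then have "del_at i x ! n \<noteq> del_at i x ! Suc n" if "n < k" for n
  proof -
    consider "Suc n < i" | "Suc n = i" | "i < Suc n" by linarith
    then show ?thesis
    proof cases
      case 1
      then show ?thesis using xs(1,3) that i by (simp add: nth_del_at)
    next
      case 2
      then show ?thesis using \<open>x ! (i - 1) \<noteq> x ! Suc i\<close> xs(1) that by (auto simp: nth_del_at)
    next
      case 3
      then show ?thesis using xs(1,3) that i by (simp add: nth_del_at)
    qed
  qed
  then show ?thesis
    using xs i len set_del_at_subset[of i x] by (auto simp: MC_gens_iff)
qed

lemma MC_incidence_eq:
  "set x \<subseteq> V \<Longrightarrow> MC_incidence V E k l x y =
    (\<Sum>i\<in>{1..<k}. if hlen E (del_at i x) = l \<and> del_at i x = y then (-1) ^ i else 0)"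
  unfolding MC_incidence_def
  using tuple_len_eq_hlen set_del_at_subset by (metis (no_types, lifting) subset_trans)

lemma MC_incidence_outside:
  assumes "x \<in> MC_gens V E (Suc k) l" "y \<notin> MC_gens V E k l"
  shows "MC_incidence V E (Suc k) l x y = 0"
proof -
  have "set x \<subseteq> V" using assms(1) by (auto simp: MC_gens_iff)
  then show ?thesis
    using del_at_in_MC_gens[OF assms(1)] assms(2) by (auto simp: MC_incidence_eq intro!: sum.neutral)
qed

lemma MC_boundary_chain: "MC_chain V E k l (MC_boundary V E (Suc k) l b)"
  unfolding MC_chain_def MC_boundary_eq_incidence by (simp add: MC_incidence_outside)

lemma MC_incidence_comp:
  assumes x: "x \<in> MC_gens V E (Suc k) l"
  shows "(\<Sum>y\<in>MC_gens V E k l. MC_incidence V E (Suc k) l x y * MC_incidence V E k l y z)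
    = (\<Sum>i\<in>{1..<Suc k}. \<Sum>j\<in>{1..<k}.
        if hlen E (del_at j (del_at i x)) = l \<and> del_at j (del_at i x) = z then (-1) ^ (i + j) else 0)"
    (is "?lhs = _")
proof -
  let ?f = "\<lambda>i j. if hlen E (del_at j (del_at i x)) = l \<and> del_at j (del_at i x) = z
    then (-1::int) ^ (i + j) else 0"
  have xs: "length x = Suc (Suc k)" "set x \<subseteq> V" "hlen E x = l"
    using x by (auto simp: MC_gens_iff)
  let ?I = "{1..<Suc k}" and ?d = "\<lambda>i y. hlen E (del_at i x) = l \<and> del_at i x = y"
  have "?lhs = (\<Sum>y\<in>MC_gens V E k l. \<Sum>i\<in>?I. if ?d i y then (-1) ^ i * MC_incidence V E k l y z else 0)"
    unfolding MC_incidence_eq[OF xs(2)] sum_distrib_right by (intro sum.cong) auto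
  also have "\<dots> = (\<Sum>i\<in>?I. \<Sum>y\<in>MC_gens V E k l. if ?d i y then (-1) ^ i * MC_incidence V E k l y z else 0)"
    by (rule sum.swap)
  also have "\<dots> = (\<Sum>i\<in>?I. if hlen E (del_at i x) = l then (-1) ^ i * MC_incidence V E k l (del_at i x) z else 0)"
    using del_at_in_MC_gens[OF x] by (intro sum.cong) (auto simp: finite_MC_gens)
  also have "\<dots> = (\<Sum>i\<in>?I. \<Sum>j\<in>{1..<k}. ?f i j)"
  proof (rule sum.cong)
    fix i assume i: "i \<in> ?I"
    have set_i: "set (del_at i x) \<subseteq> V" using set_del_at_subset xs(2) by (rule subset_trans)
    show "(if hlen E (del_at i x) = l then (-1) ^ i * MC_incidence V E k l (del_at i x) z else 0)
        = (\<Sum>j\<in>{1..<k}. ?f i j)"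
    proof (cases "hlen E (del_at i x) = l")
      case True
      then show ?thesis
        by (simp add: MC_incidence_eq[OF set_i] sum_distrib_left power_add if_distrib cong: if_cong)
    next
      case False
      \<comment> \<open>deleting never lengthens a tuple, so a second deletion cannot restore the length l\<close>
      have "hlen E (del_at j (del_at i x)) \<noteq> l" if "j \<in> {1..<k}" for j
        using hlen_del_at_le[of j "del_at i x" E] hlen_del_at_le[of i x E] i that xs False by simp
      then show ?thesis using False by (simp add: sum.neutral)
    qed
  qed simp
  finally show ?thesis .
qed

lemma MC_incidence_square_zero:
  assumes x: "x \<in> MC_gens V E (Suc k) l"
  shows "(\<Sum>y\<in>MC_gens V E k l. MC_incidence V E (Suc k) l x y * MC_incidence V E k l y z) = 0"
  unfolding MC_incidence_comp[OF x]
proof (rule sum_face_pairs_cancel)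
  fix i j assume "1 \<le> j" "j < i" "i < Suc k"
  moreover have "length x = Suc (Suc k)" using x by (simp add: MC_gens_iff)
  ultimately have "del_at (i - 1) (del_at j x) = del_at j (del_at i x)"
    using del_at_del_at[of j i x] by simp
  moreover have "(-1::int) ^ (i + j) = - ((-1) ^ (j + (i - 1)))"
    using \<open>j < i\<close> by (cases i) (auto simp: add.commute)
  ultimately show "(if hlen E (del_at (i - 1) (del_at j x)) = l \<and> del_at (i - 1) (del_at j x) = z
        then (-1) ^ (j + (i - 1)) else 0)
      = - (if hlen E (del_at j (del_at i x)) = l \<and> del_at j (del_at i x) = z
        then (-1::int) ^ (i + j) else 0)"
    by auto
qed

lemma MC_boundary_boundary: "MC_boundary V E k l (MC_boundary V E (Suc k) l b) = (\<lambda>_. 0)"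
proof
  fix z
  have "MC_boundary V E k l (MC_boundary V E (Suc k) l b) z
      = (\<Sum>x\<in>MC_gens V E (Suc k) l. b x *
          (\<Sum>y\<in>MC_gens V E k l. MC_incidence V E (Suc k) l x y * MC_incidence V E k l y z))"
    unfolding MC_boundary_eq_incidence sum_distrib_right sum_distrib_left
    by (subst sum.swap) (simp add: mult.assoc)
  then show "MC_boundary V E k l (MC_boundary V E (Suc k) l b) z = 0"
    by (simp add: MC_incidence_square_zero)
qed

definition gap :: "'a list \<Rightarrow> nat \<Rightarrow> bool" where
  "gap x j \<longleftrightarrow> Suc j < length x \<and> \<not> E (x ! j) (x ! Suc j)"

definition first_gap :: "'a list \<Rightarrow> nat" where
  "first_gap x = (LEAST j. gap x j)"

lemma gap_first_gap: "\<exists>j. gap x j \<Longrightarrow> gap x (first_gap x)"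
  unfolding first_gap_def by (rule LeastI_ex)

lemma not_gap_before_first_gap: "i < first_gap x \<Longrightarrow> \<not> gap x i"
  unfolding first_gap_def by (rule not_less_Least)

lemma first_gap_eqI: "gap x j \<Longrightarrow> (\<And>i. i < j \<Longrightarrow> \<not> gap x i) \<Longrightarrow> first_gap x = j"
  unfolding first_gap_def by (rule Least_equality) (auto simp: not_less[symmetric])

lemma MC_gen_has_gap:
  assumes x: "x \<in> MC_gens V E k l" and "k < l"
  shows "\<exists>j. gap x j"
proof (rule ccontr)
  assume "\<nexists>j. gap x j"
  then have "E (x ! i) (x ! Suc i)" if "Suc i < length x" for i
    using that unfolding gap_def by auto
  moreover have xs: "length x = Suc k" "hlen E x = l" using x by (auto simp: MC_gens_iff)
  ultimately have "hlen E x = (\<Sum>i<k. 1)"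
    unfolding hlen_conv_sum using edge_irrefl by (intro sum.cong) (auto simp: hdist_def, metis)
  then show False using xs \<open>k < l\<close> by simp
qed

end

section \<open>An acyclic matching on the generators of a pawful graph\<close>

locale pawful_graph = diameter_two_graph +
  assumes paw: "\<And>u v w. u \<in> V \<Longrightarrow> v \<in> V \<Longrightarrow> w \<in> V \<Longrightarrow>
    gdist V E u v = 2 \<Longrightarrow> gdist V E v w = 2 \<Longrightarrow> gdist V E u w = 1 \<Longrightarrow>
    \<exists>x\<in>V. gdist V E x u = 1 \<and> gdist V E x v = 1 \<and> gdist V E x w = 1"
begin

lemma common_neighbour_adjacent:
  assumes "p \<in> V" "q \<in> V" "r \<in> V" "E p q" "q \<noteq> r" "\<not> E q r"
  shows "\<exists>y. E q y \<and> E y r \<and> (p = y \<or> E p y)"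
proof (cases "E p r")
  case True
  then show ?thesis using assms edge_sym by blast
next
  case False
  have "p \<noteq> r" using assms edge_sym by blast
  have "gdist V E p r = 2" using assms False \<open>p \<noteq> r\<close> by (simp add: gdist_eq_2_iff)
  moreover have "gdist V E r q = 2" using assms edge_sym by (auto simp: gdist_eq_2_iff)
  moreover have "gdist V E p q = 1" using assms gdist_eq_1_iff by blast
  ultimately obtain y where "y \<in> V" "gdist V E y p = 1" "gdist V E y r = 1" "gdist V E y q = 1"
    using paw assms by blast
  then have "E y p" "E y r" "E y q" using assms gdist_eq_1_iff by blast+
  then show ?thesis using edge_sym by blast
qed

text \<open>
  The side condition on the preceding vertex p is what the pawful condition buys: it keeps
  the vertex before an inserted bridge from becoming deletable (\<open>del_at_raise_first_gap\<close>).
\<close>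

definition bridge :: "nat \<Rightarrow> 'a \<Rightarrow> 'a \<Rightarrow> 'a \<Rightarrow> 'a" where
  "bridge j p q r = (SOME y. E q y \<and> E y r \<and> (j = 0 \<or> p = y \<or> E p y))"

lemma bridge_spec:
  assumes "p \<in> V" "q \<in> V" "r \<in> V" "q \<noteq> r" "\<not> E q r" "0 < j \<Longrightarrow> E p q"
  shows "E q (bridge j p q r)" "E (bridge j p q r) r" "0 < j \<Longrightarrow> p = bridge j p q r \<or> E p (bridge j p q r)"
proof -
  have "\<exists>y. E q y \<and> E y r \<and> (j = 0 \<or> p = y \<or> E p y)"
    using common_neighbour[OF assms(2-5)] common_neighbour_adjacent[OF assms(1-3) _ assms(4,5)] assms(6)
    by blast
  then have "E q (bridge j p q r) \<and> E (bridge j p q r) r \<and> (j = 0 \<or> p = bridge j p q r \<or> E p (bridge j p q r))"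
    unfolding bridge_def by (rule someI_ex)
  then show "E q (bridge j p q r)" "E (bridge j p q r) r" "0 < j \<Longrightarrow> p = bridge j p q r \<or> E p (bridge j p q r)"
    by auto
qed

definition bridge_at :: "'a list \<Rightarrow> nat \<Rightarrow> 'a \<Rightarrow> 'a" where
  "bridge_at x j r = bridge j (x ! (j - 1)) (x ! j) r"

definition bridged_at :: "'a list \<Rightarrow> nat \<Rightarrow> bool" where
  "bridged_at x j \<longleftrightarrow> Suc (Suc j) < length x
    \<and> E (x ! j) (x ! Suc j) \<and> E (x ! Suc j) (x ! Suc (Suc j))
    \<and> x ! j \<noteq> x ! Suc (Suc j) \<and> \<not> E (x ! j) (x ! Suc (Suc j))
    \<and> x ! Suc j = bridge_at x j (x ! Suc (Suc j))"

definition lower_cell :: "'a list \<Rightarrow> bool" where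
  "lower_cell x \<longleftrightarrow> (\<exists>j. gap x j) \<and> (\<forall>j < first_gap x. \<not> bridged_at x j)"

definition gap_bridge :: "'a list \<Rightarrow> 'a" where
  "gap_bridge x = bridge_at x (first_gap x) (x ! Suc (first_gap x))"

definition raise :: "'a list \<Rightarrow> 'a list" where
  "raise x = ins_at (Suc (first_gap x)) (gap_bridge x) x"

text \<open>
  The defects of x are the positions before its first gap whose vertex can be deleted without
  changing the length.
\<close>

definition defects :: "'a list \<Rightarrow> nat set" where
  "defects x = {i. 0 < i \<and> i < first_gap x \<and> x ! (i - 1) \<noteq> x ! Suc i \<and> \<not> E (x ! (i - 1)) (x ! Suc i)}"

definition weight :: "'a list \<Rightarrow> nat" where
  "weight x = card (defects x) * length x + (length x - first_gap x)"

lemma finite_defects: "finite (defects x)"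
  by (rule finite_subset[of _ "{..<first_gap x}"]) (auto simp: defects_def)

context
  fixes x :: "'a list" and k l :: nat
  assumes x_gen: "x \<in> MC_gens V E k l" and x_lower: "lower_cell x"
begin

lemma lower_cell_facts:
  shows "length x = Suc k" "set x \<subseteq> V" "\<forall>n<k. x ! n \<noteq> x ! Suc n" "hlen E x = l"
    and "first_gap x < k" "\<not> E (x ! first_gap x) (x ! Suc (first_gap x))"
    and "x ! first_gap x \<noteq> x ! Suc (first_gap x)"
  using x_gen gap_first_gap[of x] x_lower by (auto simp: MC_gens_iff gap_def lower_cell_def)

lemma edge_before_first_gap: "i < first_gap x \<Longrightarrow> E (x ! i) (x ! Suc i)"
  using not_gap_before_first_gap[of i x] lower_cell_facts by (auto simp: gap_def)

lemma gap_bridge_edges: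
  shows "E (x ! first_gap x) (gap_bridge x)" "E (gap_bridge x) (x ! Suc (first_gap x))"
    and "0 < first_gap x \<Longrightarrow> x ! (first_gap x - 1) = gap_bridge x \<or> E (x ! (first_gap x - 1)) (gap_bridge x)"
proof -
  let ?j = "first_gap x"
  have "x ! n \<in> V" if "n < Suc k" for n
    using nth_mem[of n x] lower_cell_facts(1,2) that by auto
  then have "x ! (?j - 1) \<in> V" "x ! ?j \<in> V" "x ! Suc ?j \<in> V"
    using lower_cell_facts(5) by auto
  from bridge_spec[OF this lower_cell_facts(7,6)] edge_before_first_gap[of "?j - 1"]
  show "E (x ! ?j) (gap_bridge x)" "E (gap_bridge x) (x ! Suc ?j)"
    and "0 < ?j \<Longrightarrow> x ! (?j - 1) = gap_bridge x \<or> E (x ! (?j - 1)) (gap_bridge x)"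
    unfolding gap_bridge_def bridge_at_def by simp_all
qed

lemma length_raise: "length (raise x) = Suc (Suc k)"
  using lower_cell_facts by (simp add: raise_def)

lemma nth_raise:
  "n \<le> Suc k \<Longrightarrow> raise x ! n =
    (if n < Suc (first_gap x) then x ! n else if n = Suc (first_gap x) then gap_bridge x else x ! (n - 1))"
  using lower_cell_facts by (simp add: raise_def nth_ins_at)

lemma del_at_raise: "del_at (Suc (first_gap x)) (raise x) = x"
  using lower_cell_facts by (simp add: raise_def del_at_ins_at)

lemma raise_in_MC_gens: "raise x \<in> MC_gens V E (Suc k) l"
proof -
  let ?j = "first_gap x" and ?y = "gap_bridge x"
  have "?y \<in> V" using gap_bridge_edges(1) edge_in_V by blast
  then have "set (raise x) \<subseteq> V"
    using set_ins_at_subset[of "Suc ?j" ?y x] lower_cell_facts(2) unfolding raise_def by blast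
  moreover have "raise x ! n \<noteq> raise x ! Suc n" if "n < Suc k" for n
  proof -
    consider "n < ?j" | "n = ?j" | "n = Suc ?j" | "Suc ?j < n" by linarith
    then show ?thesis
    proof cases
      case 1
      then show ?thesis using nth_raise[of n] nth_raise[of "Suc n"] that lower_cell_facts by simp
    next
      case 2
      then show ?thesis using nth_raise[of n] nth_raise[of "Suc n"] that gap_bridge_edges edge_irrefl by auto
    next
      case 3
      then show ?thesis using nth_raise[of n] nth_raise[of "Suc n"] that gap_bridge_edges edge_irrefl by auto
    next
      case 4
      then obtain m where "n = Suc m" by (cases n) auto
      then show ?thesis
        using nth_raise[of n] nth_raise[of "Suc n"] that lower_cell_facts(3)[rule_format, of m] 4
        by simp
    qed
  qed
  moreover have "hlen E (raise x) = l"
  proof -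
    have z: "raise x ! ?j = x ! ?j" "raise x ! Suc ?j = ?y" "raise x ! Suc (Suc ?j) = x ! Suc ?j"
      using nth_raise lower_cell_facts by auto
    have "hdist E (x ! ?j) (x ! Suc ?j) = 2" "hdist E (x ! ?j) ?y = 1" "hdist E ?y (x ! Suc ?j) = 1"
      using lower_cell_facts gap_bridge_edges edge_irrefl by (auto simp: hdist_def)
    then show ?thesis
      using hlen_del_at[of "Suc ?j" "raise x" E] z length_raise lower_cell_facts del_at_raise by simp
  qed
  ultimately show ?thesis using length_raise by (simp add: MC_gens_iff)
qed

lemma MC_incidence_raise_self: "MC_incidence V E (Suc k) l (raise x) x = (-1) ^ Suc (first_gap x)"
proof -
  let ?j = "first_gap x" and ?z = "raise x"
  have z: "length ?z = Suc (Suc k)" "set ?z \<subseteq> V" "\<forall>n. Suc n < length ?z \<longrightarrow> ?z ! n \<noteq> ?z ! Suc n"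
    using raise_in_MC_gens by (auto simp: MC_gens_iff)
  have "del_at i ?z = x \<longleftrightarrow> i = Suc ?j" if "i < Suc k" for i
  proof (cases "i < Suc ?j")
    case True
    then show ?thesis
      using del_at_neq[OF z(3), of i "Suc ?j"] z(1) lower_cell_facts del_at_raise by simp
  next
    case False
    then show ?thesis
      using del_at_neq[OF z(3), of "Suc ?j" i] z(1) that del_at_raise by (cases "i = Suc ?j") auto
  qed
  then have "MC_incidence V E (Suc k) l ?z x = (\<Sum>i\<in>{1..<Suc k}. if i = Suc ?j then (-1) ^ i else 0)"
    unfolding MC_incidence_eq[OF z(2)] using lower_cell_facts(4) del_at_raise by (intro sum.cong) auto
  then show ?thesis using lower_cell_facts by simp
qed

lemma length_del_at_raise: "i < Suc (Suc k) \<Longrightarrow> length (del_at i (raise x)) = Suc k"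
  using length_raise by simp

lemma nth_del_at_raise:
  "i < Suc (Suc k) \<Longrightarrow> n < Suc k \<Longrightarrow>
    del_at i (raise x) ! n = (if n < i then raise x ! n else raise x ! Suc n)"
  using nth_del_at[of i "raise x" n] length_raise by simp

lemma weight_del_at_raise_before_gap:
  assumes i: "1 \<le> i" "i < first_gap x" and len: "hlen E (del_at i (raise x)) = l"
  shows "weight (del_at i (raise x)) < weight x"
proof -
  let ?j = "first_gap x" and ?z = "raise x" and ?w = "del_at i (raise x)"
  have ik: "i < Suc k" using i lower_cell_facts(5) by simp
  note face = face_of_MC_gen[OF raise_in_MC_gens i(1) ik len]
  have z: "?z ! (i - 1) = x ! (i - 1)" "?z ! i = x ! i" "?z ! Suc i = x ! Suc i"
    using nth_raise[of "i - 1"] nth_raise[of i] nth_raise[of "Suc i"] i lower_cell_facts(5) by auto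
  have w_below: "?w ! n = x ! n" if "n < i" for n
    using nth_del_at_raise[of i n] nth_raise[of n] that i lower_cell_facts(5) by simp
  have w_i: "?w ! i = x ! Suc i"
    using nth_del_at_raise[of i i] z ik by simp
  have gap_w: "first_gap ?w = i - 1"
  proof (rule first_gap_eqI)
    show "gap ?w (i - 1)"
      using w_below[of "i - 1"] w_i face z i ik length_del_at_raise[of i] unfolding gap_def by simp
  next
    fix n assume "n < i - 1"
    then show "\<not> gap ?w n"
      using w_below[of n] w_below[of "Suc n"] edge_before_first_gap[of n] i unfolding gap_def by simp
  qed
  have "i \<in> defects x" using face z i unfolding defects_def by auto
  moreover have "defects ?w \<subseteq> defects x - {i}"
    using w_below i unfolding defects_def gap_w by auto
  ultimately have "defects ?w \<subset> defects x" by blast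
  then have "card (defects ?w) < card (defects x)" by (rule psubset_card_mono[OF finite_defects])
  then have "(card (defects ?w) + 1) * Suc k \<le> card (defects x) * Suc k"
    by (intro mult_le_mono1) simp
  then show ?thesis
    using lower_cell_facts(1,5) length_del_at_raise[of i] ik unfolding weight_def gap_w by simp
qed

lemma del_at_raise_first_gap:
  assumes "0 < first_gap x"
  shows "hlen E (del_at (first_gap x) (raise x)) \<noteq> l"
proof
  let ?j = "first_gap x"
  assume "hlen E (del_at ?j (raise x)) = l"
  from face_of_MC_gen[OF raise_in_MC_gens _ _ this]
  have "raise x ! (?j - 1) \<noteq> raise x ! Suc ?j" "\<not> E (raise x ! (?j - 1)) (raise x ! Suc ?j)"
    using assms lower_cell_facts(5) by auto
  moreover have "raise x ! (?j - 1) = x ! (?j - 1)" "raise x ! Suc ?j = gap_bridge x"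
    using nth_raise lower_cell_facts(5) by auto
  ultimately show False using gap_bridge_edges(3) assms by simp
qed

lemma weight_del_at_raise_after_bridge:
  assumes i: "Suc (Suc (first_gap x)) < Suc k"
    and len: "hlen E (del_at (Suc (Suc (first_gap x))) (raise x)) = l"
  shows "weight (del_at (Suc (Suc (first_gap x))) (raise x)) < weight x"
proof -
  let ?j = "first_gap x" and ?y = "gap_bridge x" and ?w = "del_at (Suc (Suc (first_gap x))) (raise x)"
  note face = face_of_MC_gen[OF raise_in_MC_gens _ i len]
  have z: "raise x ! Suc ?j = ?y" "raise x ! Suc (Suc ?j) = x ! Suc ?j"
    "raise x ! Suc (Suc (Suc ?j)) = x ! Suc (Suc ?j)"
    using nth_raise i by auto
  have w_below: "?w ! n = x ! n" if "n < Suc ?j" for n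
    using nth_del_at_raise[of "Suc (Suc ?j)" n] nth_raise[of n] that i by simp
  have w: "?w ! Suc ?j = ?y" "?w ! Suc (Suc ?j) = x ! Suc (Suc ?j)"
    using nth_del_at_raise[of "Suc (Suc ?j)" "Suc ?j"] nth_del_at_raise[of "Suc (Suc ?j)" "Suc (Suc ?j)"] z i
    by simp_all
  have gap_w: "first_gap ?w = Suc ?j"
  proof (rule first_gap_eqI)
    show "gap ?w (Suc ?j)"
      using w face z i length_del_at_raise unfolding gap_def by simp
  next
    fix n assume "n < Suc ?j"
    then show "\<not> gap ?w n"
      using w_below[of n] w_below[of "Suc n"] w edge_before_first_gap[of n] gap_bridge_edges(1)
      by (cases "n = ?j") (auto simp: gap_def)
  qed
  have "defects ?w = defects x"
  proof (rule set_eqI)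
    fix n
    show "n \<in> defects ?w \<longleftrightarrow> n \<in> defects x"
    proof (cases "n = ?j")
      case True
      then show ?thesis
        using w_below[of "?j - 1"] w gap_bridge_edges(3) unfolding defects_def gap_w by auto
    next
      case False
      then show ?thesis
        using w_below[of "n - 1"] w_below[of "Suc n"] unfolding defects_def gap_w by (cases "n < ?j") auto
    qed
  qed
  then show ?thesis
    using lower_cell_facts(1,5) length_del_at_raise i unfolding weight_def gap_w by simp
qed

lemma del_at_raise_beyond_not_lower_cell:
  assumes i: "Suc (Suc (first_gap x)) < i" "i < Suc k"
  shows "\<not> lower_cell (del_at i (raise x))"
proof
  let ?j = "first_gap x" and ?y = "gap_bridge x" and ?w = "del_at i (raise x)"
  assume lower: "lower_cell ?w"
  have w_below: "?w ! n = raise x ! n" if "n < i" for n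
    using nth_del_at_raise[of i n] that i by simp
  have w: "?w ! ?j = x ! ?j" "?w ! Suc ?j = ?y" "?w ! Suc (Suc ?j) = x ! Suc ?j" "?w ! (?j - 1) = x ! (?j - 1)"
    using w_below nth_raise i by auto
  have bridged: "bridged_at ?w ?j"
    unfolding bridged_at_def bridge_at_def
    using w gap_bridge_edges lower_cell_facts length_del_at_raise[of i] i
    by (simp add: gap_bridge_def bridge_at_def)
  have no_gap: "\<not> gap ?w n" if le: "n \<le> Suc ?j" for n
  proof -
    consider "n < ?j" | "n = ?j" | "n = Suc ?j" using le by linarith
    then show ?thesis
    proof cases
      case 1
      then show ?thesis
        using w_below[of n] w_below[of "Suc n"] nth_raise[of n] nth_raise[of "Suc n"]
          edge_before_first_gap[of n] i unfolding gap_def by simp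
    qed (use w gap_bridge_edges in \<open>auto simp: gap_def\<close>)
  qed
  have "gap ?w (first_gap ?w)"
    using gap_first_gap lower unfolding lower_cell_def by blast
  then have "\<not> first_gap ?w \<le> Suc ?j" using no_gap by blast
  then show False using bridged lower unfolding lower_cell_def by simp
qed

lemma weight_lt_if_MC_incidence_raise:
  assumes w: "lower_cell w" "w \<noteq> x" and inc: "MC_incidence V E (Suc k) l (raise x) w \<noteq> 0"
  shows "weight w < weight x"
proof -
  let ?j = "first_gap x"
  have set_z: "set (raise x) \<subseteq> V" using raise_in_MC_gens by (simp add: MC_gens_iff)
  have "\<exists>i\<in>{1..<Suc k}. hlen E (del_at i (raise x)) = l \<and> del_at i (raise x) = w"
  proof (rule ccontr)
    assume "\<not> ?thesis"
    then have "MC_incidence V E (Suc k) l (raise x) w = 0"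
      unfolding MC_incidence_eq[OF set_z] by (intro sum.neutral) auto
    with inc show False by contradiction
  qed
  then obtain i where i: "1 \<le> i" "i < Suc k" "hlen E (del_at i (raise x)) = l" "del_at i (raise x) = w"
    by auto
  then have "i \<noteq> Suc ?j" using w(2) del_at_raise by auto
  then consider "i < ?j" | "i = ?j" | "i = Suc (Suc ?j)" | "Suc (Suc ?j) < i" by linarith
  then show ?thesis
  proof cases
    case 1
    then show ?thesis using weight_del_at_raise_before_gap i by blast
  next
    case 2
    then show ?thesis using del_at_raise_first_gap i by simp
  next
    case 3
    then show ?thesis using weight_del_at_raise_after_bridge i by blast
  next
    case 4
    then show ?thesis using del_at_raise_beyond_not_lower_cell i w(1) by blast
  qed
qed

end

lemma del_at_bridge_in_MC_gens:
  assumes x: "x \<in> MC_gens V E (Suc k) l" and m: "bridged_at x m"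
  shows "del_at (Suc m) x \<in> MC_gens V E k l"
proof (rule del_at_in_MC_gens[OF x])
  have len: "length x = Suc (Suc k)" "hlen E x = l" using x by (auto simp: MC_gens_iff)
  then show "Suc m < Suc k" using m by (simp add: bridged_at_def)
  have "hdist E (x ! m) (x ! Suc (Suc m)) = 2" "hdist E (x ! m) (x ! Suc m) = 1"
    "hdist E (x ! Suc m) (x ! Suc (Suc m)) = 1"
    using m edge_irrefl by (auto simp: bridged_at_def hdist_def)
  then show "hlen E (del_at (Suc m) x) = l"
    using hlen_del_at[of "Suc m" x E] m len by (simp add: bridged_at_def)
qed simp

lemma lower_cell_del_at_first_bridge:
  assumes x: "x \<in> MC_gens V E (Suc k) l" and gap: "\<exists>j. gap x j"
    and m: "m < first_gap x" "bridged_at x m" and first: "\<And>j. j < m \<Longrightarrow> \<not> bridged_at x j"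
  shows "lower_cell (del_at (Suc m) x)" "raise (del_at (Suc m) x) = x"
proof -
  let ?y = "del_at (Suc m) x"
  have len: "length x = Suc (Suc k)" using x by (simp add: MC_gens_iff)
  have M: "Suc (Suc m) < length x" "E (x ! m) (x ! Suc m)" "E (x ! Suc m) (x ! Suc (Suc m))"
    "x ! m \<noteq> x ! Suc (Suc m)" "\<not> E (x ! m) (x ! Suc (Suc m))"
    "x ! Suc m = bridge_at x m (x ! Suc (Suc m))"
    using m(2) unfolding bridged_at_def by auto
  have y_len: "length ?y = Suc k" using M len by simp
  have y_nth: "?y ! n = (if n < Suc m then x ! n else x ! Suc n)" if "n < Suc k" for n
    using nth_del_at[of "Suc m" x n] M len that by auto
  have y_below: "?y ! n = x ! n" if "n \<le> m" for n
    using y_nth[of n] that M len by auto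
  have edge_x: "E (x ! n) (x ! Suc n)" if "n < first_gap x" for n
    using not_gap_before_first_gap[OF that] gap_first_gap[OF gap] that unfolding gap_def by auto
  have gap_m: "gap ?y m"
    using y_nth[of m] y_nth[of "Suc m"] M y_len len unfolding gap_def by auto
  have gap_y: "first_gap ?y = m"
  proof (rule first_gap_eqI[OF gap_m])
    fix n assume "n < m"
    then show "\<not> gap ?y n"
      using y_nth[of n] y_nth[of "Suc n"] edge_x[of n] m M len unfolding gap_def by auto
  qed
  have "\<not> bridged_at ?y j" if j: "j < m" for j
  proof
    assume bridged: "bridged_at ?y j"
    show False
    proof (cases "Suc j = m")
      case True
      then show False using bridged y_below[of m] y_nth[of "Suc m"] M y_len unfolding bridged_at_def by auto
    next
      case False
      then have "Suc (Suc j) \<le> m" using j by simp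
      then have "?y ! j = x ! j" "?y ! Suc j = x ! Suc j" "?y ! Suc (Suc j) = x ! Suc (Suc j)"
        "?y ! (j - 1) = x ! (j - 1)"
        using y_below by auto
      then have "bridged_at x j"
        using bridged M \<open>Suc (Suc j) \<le> m\<close> unfolding bridged_at_def bridge_at_def by auto
      then show False using first j by blast
    qed
  qed
  then show "lower_cell ?y"
    unfolding lower_cell_def gap_y using gap_m by blast
  have "gap_bridge ?y = x ! Suc m"
    using M y_below[of m] y_below[of "m - 1"] y_nth[of "Suc m"] len
    unfolding gap_bridge_def bridge_at_def gap_y by auto
  then show "raise ?y = x"
    using ins_at_del_at[of "Suc m" x] M unfolding raise_def gap_y by simp
qed

lemma raise_preimage:
  assumes x: "x \<in> MC_gens V E k l" and gap: "\<exists>j. gap x j" and not_lower: "\<not> lower_cell x"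
  shows "\<exists>k'. k = Suc k' \<and> (\<exists>y\<in>MC_gens V E k' l. lower_cell y \<and> raise y = x)"
proof -
  have "\<exists>j. j < first_gap x \<and> bridged_at x j" using gap not_lower unfolding lower_cell_def by blast
  then obtain m where m: "m < first_gap x" "bridged_at x m"
    and least: "\<forall>j<m. \<not> (j < first_gap x \<and> bridged_at x j)"
    unfolding exists_least_iff[of "\<lambda>j. j < first_gap x \<and> bridged_at x j"] by blast
  then have first: "\<not> bridged_at x j" if "j < m" for j
    using that by auto
  obtain k' where k': "k = Suc k'"
    using x m(2) by (cases k) (auto simp: bridged_at_def MC_gens_iff)
  then show ?thesis
    using x del_at_bridge_in_MC_gens lower_cell_del_at_first_bridge[OF _ gap m first] m(2) by blast
qed

section \<open>Vanishing of magnitude homology off the diagonal\<close>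

lemma raise_chain:
  assumes S: "S \<subseteq> MC_gens V E k l" "\<forall>x\<in>S. lower_cell x"
  shows "MC_chain V E (Suc k) l (\<lambda>w. \<Sum>x\<in>S. if raise x = w then a x else 0)"
    and "MC_boundary V E (Suc k) l (\<lambda>w. \<Sum>x\<in>S. if raise x = w then a x else 0) y
      = (\<Sum>x\<in>S. a x * MC_incidence V E (Suc k) l (raise x) y)"
proof -
  have raise_S: "raise x \<in> MC_gens V E (Suc k) l" if "x \<in> S" for x
    using raise_in_MC_gens S that by blast
  then show "MC_chain V E (Suc k) l (\<lambda>w. \<Sum>x\<in>S. if raise x = w then a x else 0)"
    unfolding MC_chain_def by (auto intro!: sum.neutral)
  have "MC_boundary V E (Suc k) l (\<lambda>w. \<Sum>x\<in>S. if raise x = w then a x else 0) y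
      = (\<Sum>x\<in>S. \<Sum>w\<in>MC_gens V E (Suc k) l. if raise x = w then a x * MC_incidence V E (Suc k) l w y else 0)"
    unfolding MC_boundary_eq_incidence sum_distrib_right
    by (subst sum.swap) (auto intro!: sum.cong)
  also have "\<dots> = (\<Sum>x\<in>S. a x * MC_incidence V E (Suc k) l (raise x) y)"
    using raise_S by (auto simp: finite_MC_gens intro!: sum.cong)
  finally show "MC_boundary V E (Suc k) l (\<lambda>w. \<Sum>x\<in>S. if raise x = w then a x else 0) y
      = (\<Sum>x\<in>S. a x * MC_incidence V E (Suc k) l (raise x) y)" .
qed

lemma lower_weight_reduction_step:
  assumes c: "MC_chain V E k l c"
    and bound: "\<forall>x\<in>MC_gens V E k l. lower_cell x \<and> c x \<noteq> 0 \<longrightarrow> weight x \<le> r"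
  shows "\<exists>b. MC_chain V E (Suc k) l b \<and>
    (\<forall>x\<in>MC_gens V E k l. lower_cell x \<and> c x \<noteq> MC_boundary V E (Suc k) l b x \<longrightarrow> weight x < r)"
proof -
  define S where "S = {x\<in>MC_gens V E k l. lower_cell x \<and> weight x = r \<and> c x \<noteq> 0}"
  define a where "a x = c x * (-1) ^ Suc (first_gap x)" for x
  have S: "S \<subseteq> MC_gens V E k l" "\<forall>x\<in>S. lower_cell x" unfolding S_def by auto
  have "finite S" using S(1) finite_MC_gens finite_subset by blast
  note b = raise_chain[OF S, of a]
  have "c x0 = MC_boundary V E (Suc k) l (\<lambda>w. \<Sum>x\<in>S. if raise x = w then a x else 0) x0"
    if x0: "x0 \<in> MC_gens V E k l" "lower_cell x0" "r \<le> weight x0" for x0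
  proof -
    \<comment> \<open>a raised cell of weight r meets no other lower cell of weight at least r\<close>
    have others: "a x * MC_incidence V E (Suc k) l (raise x) x0 = 0" if "x \<in> S" "x \<noteq> x0" for x
      using weight_lt_if_MC_incidence_raise[of x k l x0] that x0 unfolding S_def by fastforce
    show ?thesis
    proof (cases "x0 \<in> S")
      case True
      have "(\<Sum>x\<in>S. a x * MC_incidence V E (Suc k) l (raise x) x0)
          = a x0 * MC_incidence V E (Suc k) l (raise x0) x0
            + (\<Sum>x\<in>S - {x0}. a x * MC_incidence V E (Suc k) l (raise x) x0)"
        by (rule sum.remove[OF \<open>finite S\<close> True])
      also have "\<dots> = a x0 * MC_incidence V E (Suc k) l (raise x0) x0"
        using others by (simp add: sum.neutral)
      also have "\<dots> = c x0"
        using MC_incidence_raise_self[of x0 k l] x0 unfolding a_def by (simp flip: power_mult_distrib)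
      finally show ?thesis using b(2) by simp
    next
      case False
      then have "c x0 = 0" using x0 bound unfolding S_def by fastforce
      moreover have "(\<Sum>x\<in>S. a x * MC_incidence V E (Suc k) l (raise x) x0) = 0"
        using others False by (intro sum.neutral) auto
      ultimately show ?thesis using b(2) by simp
    qed
  qed
  then show ?thesis using b(1) by (meson not_le)
qed

lemma boundary_agrees_on_lower_cells:
  assumes c: "MC_chain V E k l c"
  shows "\<exists>b. MC_chain V E (Suc k) l b \<and> (\<forall>x. lower_cell x \<longrightarrow> c x = MC_boundary V E (Suc k) l b x)"
proof -
  have "\<exists>b. MC_chain V E (Suc k) l b \<and> (\<forall>x. lower_cell x \<longrightarrow> c x = MC_boundary V E (Suc k) l b x)"
    if "MC_chain V E k l c" "\<forall>x\<in>MC_gens V E k l. lower_cell x \<and> c x \<noteq> 0 \<longrightarrow> weight x < r" for c r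
    using that
  proof (induction r arbitrary: c)
    case 0
    then have "c x = 0" if "lower_cell x" for x using that unfolding MC_chain_def by auto
    then show ?case by (intro exI[of _ "\<lambda>_. 0"]) (simp add: MC_chain_def MC_boundary_zero)
  next
    case (Suc r)
    have "\<forall>x\<in>MC_gens V E k l. lower_cell x \<and> c x \<noteq> 0 \<longrightarrow> weight x \<le> r"
      using Suc.prems(2) by (simp add: less_Suc_eq_le)
    then obtain b0 where b0: "MC_chain V E (Suc k) l b0"
      "\<forall>x\<in>MC_gens V E k l. lower_cell x \<and> c x \<noteq> MC_boundary V E (Suc k) l b0 x \<longrightarrow> weight x < r"
      using lower_weight_reduction_step[OF Suc.prems(1)] by blast
    define c1 where "c1 x = c x - MC_boundary V E (Suc k) l b0 x" for x
    have "MC_chain V E k l c1"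
      using Suc.prems(1) MC_boundary_chain[of k l b0] unfolding MC_chain_def c1_def by auto
    moreover have "\<forall>x\<in>MC_gens V E k l. lower_cell x \<and> c1 x \<noteq> 0 \<longrightarrow> weight x < r"
      using b0(2) unfolding c1_def by auto
    ultimately obtain b1 where b1: "MC_chain V E (Suc k) l b1"
      "\<forall>x. lower_cell x \<longrightarrow> c1 x = MC_boundary V E (Suc k) l b1 x"
      using Suc.IH by blast
    show ?case
    proof (intro exI[of _ "\<lambda>w. b0 w + b1 w"] conjI allI impI)
      show "MC_chain V E (Suc k) l (\<lambda>w. b0 w + b1 w)"
        using b0(1) b1(1) unfolding MC_chain_def by auto
      fix x assume "lower_cell x"
      then show "c x = MC_boundary V E (Suc k) l (\<lambda>w. b0 w + b1 w) x"
        using b1(2) unfolding MC_boundary_add c1_def by auto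
    qed
  qed
  moreover have "\<forall>x\<in>MC_gens V E k l. weight x < Suc (Max (weight ` MC_gens V E k l))"
    using finite_MC_gens by (simp add: le_imp_less_Suc)
  ultimately show ?thesis using c by blast
qed

lemma cycle_vanishing_on_lower_cells:
  assumes "k < l" and c: "MC_chain V E k l c" and cycle: "MC_boundary V E k l c = (\<lambda>_. 0)"
    and lower: "\<And>x. lower_cell x \<Longrightarrow> c x = 0"
  shows "c = (\<lambda>_. 0)"
proof (rule ccontr)
  assume "c \<noteq> (\<lambda>_. 0)"
  define T where "T = {x\<in>MC_gens V E k l. c x \<noteq> 0}"
  have "T \<noteq> {}" using \<open>c \<noteq> (\<lambda>_. 0)\<close> c unfolding T_def MC_chain_def by auto
  have "finite T" unfolding T_def using finite_MC_gens by simp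
  have preimage: "\<exists>k'. k = Suc k' \<and> (\<exists>y\<in>MC_gens V E k' l. lower_cell y \<and> raise y = x)" if "x \<in> T" for x
    using that raise_preimage MC_gen_has_gap[OF _ \<open>k < l\<close>] lower unfolding T_def by blast
  then obtain k' where k': "k = Suc k'" using \<open>T \<noteq> {}\<close> by blast
  define lower_of where "lower_of x = (SOME y. y \<in> MC_gens V E k' l \<and> lower_cell y \<and> raise y = x)" for x
  have lower_of: "lower_of x \<in> MC_gens V E k' l" "lower_cell (lower_of x)" "raise (lower_of x) = x"
    if "x \<in> T" for x
    using someI_ex[of "\<lambda>y. y \<in> MC_gens V E k' l \<and> lower_cell y \<and> raise y = x"] preimage[OF that] k'
    unfolding lower_of_def by auto
  have "Max ((\<lambda>x. weight (lower_of x)) ` T) \<in> (\<lambda>x. weight (lower_of x)) ` T"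
    using \<open>finite T\<close> \<open>T \<noteq> {}\<close> by (intro Max_in) auto
  then obtain x where x: "x \<in> T" and x_max: "Max ((\<lambda>x. weight (lower_of x)) ` T) = weight (lower_of x)"
    by auto
  have max: "weight (lower_of x') \<le> weight (lower_of x)" if "x' \<in> T" for x'
    unfolding x_max[symmetric] using \<open>finite T\<close> that by simp
  let ?y = "lower_of x"
  have others: "c x' * MC_incidence V E k l x' ?y = 0" if "x' \<in> MC_gens V E k l" "x' \<noteq> x" for x'
  proof (cases "x' \<in> T")
    case True
    have "?y \<noteq> lower_of x'" using lower_of True x that(2) by metis
    have "MC_incidence V E (Suc k') l (raise (lower_of x')) ?y = 0"
    proof (rule ccontr)
      assume "MC_incidence V E (Suc k') l (raise (lower_of x')) ?y \<noteq> 0"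
      with weight_lt_if_MC_incidence_raise[OF lower_of(1,2)[OF True] lower_of(2)[OF x] \<open>?y \<noteq> lower_of x'\<close>]
      have "weight ?y < weight (lower_of x')" .
      then show False using max[OF True] by simp
    qed
    then show ?thesis using lower_of(3)[OF True] k' by simp
  qed (use that in \<open>simp add: T_def\<close>)
  have x_gen: "x \<in> MC_gens V E k l" using x unfolding T_def by simp
  have "0 = MC_boundary V E k l c ?y" using cycle by simp
  also have "\<dots> = c x * MC_incidence V E k l x ?y
      + (\<Sum>x'\<in>MC_gens V E k l - {x}. c x' * MC_incidence V E k l x' ?y)"
    unfolding MC_boundary_eq_incidence by (rule sum.remove[OF finite_MC_gens x_gen])
  also have "\<dots> = c x * MC_incidence V E k l x ?y"
    using others by (simp add: sum.neutral)
  also have "\<dots> = c x * (-1) ^ Suc (first_gap ?y)"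
    using MC_incidence_raise_self[OF lower_of(1,2)[OF x]] lower_of(3)[OF x] k' by simp
  finally show False using x unfolding T_def by simp
qed

lemma MH_zero_off_diagonal:
  assumes "k \<noteq> l"
  shows "MH_zero V E k l"
  unfolding MH_zero_def
proof (intro allI impI)
  fix c assume c: "MC_chain V E k l c \<and> MC_boundary V E k l c = (\<lambda>_. 0)"
  show "\<exists>b. MC_chain V E (Suc k) l b \<and> MC_boundary V E (Suc k) l b = c"
  proof (cases "l < k")
    case True
    then have "c = (\<lambda>_. 0)" using c MC_gens_empty unfolding MC_chain_def by auto
    then show ?thesis by (intro exI[of _ "\<lambda>_. 0"]) (simp add: MC_chain_def MC_boundary_zero)
  next
    case False
    obtain b where b: "MC_chain V E (Suc k) l b" "\<And>x. lower_cell x \<Longrightarrow> c x = MC_boundary V E (Suc k) l b x"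
      using boundary_agrees_on_lower_cells c by blast
    define c' where "c' x = c x - MC_boundary V E (Suc k) l b x" for x
    have "MC_chain V E k l c'"
      using c MC_boundary_chain[of k l b] unfolding MC_chain_def c'_def by auto
    moreover have "MC_boundary V E k l c' = (\<lambda>_. 0)"
      using c unfolding c'_def MC_boundary_diff MC_boundary_boundary by simp
    moreover have "c' x = 0" if "lower_cell x" for x
      using b(2)[OF that] by (simp add: c'_def)
    moreover have "k < l" using False assms by simp
    ultimately have c'_zero: "c' = (\<lambda>_. 0)"
      using cycle_vanishing_on_lower_cells by blast
    have "c y = MC_boundary V E (Suc k) l b y" for y
      using fun_cong[OF c'_zero, of y] by (simp add: c'_def)
    then have "MC_boundary V E (Suc k) l b = c" by (intro ext) simp
    then show ?thesis using b(1) by blast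
  qed
qed

end

theorem theorem3p3:
  fixes V :: "'a set" and E :: "'a \<Rightarrow> 'a \<Rightarrow> bool"
  assumes "pawful V E"
  shows "diagonal V E"
proof -
  interpret pawful_graph V E
    using assms unfolding pawful_def by unfold_locales auto
  show ?thesis unfolding diagonal_def using MH_zero_off_diagonal by blast
qed

end
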